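(* Let $(C,D)$ and $(C,D')$ be two multifactorizations of $w$ on the same underlying $R$-module $C$, supported in finitely many filtration gradings, with $D=\sum_i d_i$, $D'=\sum_i d_i'$, and suppose $d_i=d_i'$ for all $i<n$ (some $n\ge1$). Then $d_n-d_n'$ is a chain map of matrix factorizations $(C,d_0)\to(C,d_0)\{-k\}$. If moreover this chain map is $0$-homotopic to the zero map, then there is a differential $D''=\sum_i d_i''$ on $C$ such that $(C,D'')$ is a multifactorization of $w$ isomorphic to $(C,D')$ and $d_i''=d_i$ for all $i<n+1$.
   Context: All rings and modules are bigraded by an internal grading and a filtration grading. For a module $M$, $M\{i,j\}$ denotes $M$ with gradings shifted so that an element of bidegree $(a,b)$ in $M$ has bidegree $(a+i,b+j)$ in $M\{i,j\}$, $M\{i\}=M\{i,0\}$; a shift by an odd internal amount negates the differential (Koszul sign rule using the internal grading). Fix a ring $R$ and homogeneous $w\in R$ of bidegree $(2k,0)$, $k$ odd. A matrix factorization of $w$ is an $R$-module with $R$-linear $d$ of bidegree $(k,0)$, $d^2=w$. A multifactorization of $w$ is an $R$-module $C$ with $R$-linear maps $d_i:C\to C$ ($i\ge0$) homogeneous of bidegree $(k,i)$ such that $D=\sum_id_i$ satisfies $D^2=w$; $(C,d_0)$ is its vertical factorization. A chain map $F:(C,D)\to(C',D')$ is $F=\sum_{i\ge0}f_i$, $f_i$ $R$-linear of bidegree $(0,i)$, with $FD=D'F$; an isomorphism of multifactorizations is an invertible chain map. For an integer $m$, an $m$-homotopy between chain maps $F,G$ is $H=\sum_{i\ge-m}h_i$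 with $h_i$ of bidegree $(-k,i)$ and $F-G=HD+D'H$ (for matrix factorizations of the vertical kind, only the $d_0$ differentials enter). *)

theory Defs
  imports Main "HOL.Modules" "HOL-Library.Product_Plus"
begin

text \<open>Bigradings are encoded by families of projections onto homogeneous
components, indexed by bidegrees (internal, filtration) in int x int.\<close>

definition graded_decomp :: "(int \<times> int \<Rightarrow> 'a::ab_group_add \<Rightarrow> 'a) \<Rightarrow> bool" where
  "graded_decomp p \<longleftrightarrow>
     (\<forall>g x y. p g (x + y) = p g x + p g y) \<and>
     (\<forall>g h x. p g (p h x) = (if g = h then p h x else 0)) \<and>
     (\<forall>x. finite {g. p g x \<noteq> 0} \<and> x = (\<Sum>g\<in>{g. p g x \<noteq> 0}. p g x))"

definition homog :: "(int \<times> int \<Rightarrow> 'a \<Rightarrow> 'a) \<Rightarrow> int \<times> int \<Rightarrow> 'a \<Rightarrow> bool" where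
  "homog p g x \<longleftrightarrow> p g x = x"

definition graded_ring :: "(int \<times> int \<Rightarrow> 'r::comm_ring_1 \<Rightarrow> 'r) \<Rightarrow> bool" where
  "graded_ring pR \<longleftrightarrow> graded_decomp pR \<and> homog pR (0, 0) 1 \<and>
     (\<forall>g h a b. homog pR g a \<longrightarrow> homog pR h b \<longrightarrow> homog pR (g + h) (a * b))"

definition graded_module ::
  "(int \<times> int \<Rightarrow> 'r::comm_ring_1 \<Rightarrow> 'r) \<Rightarrow> ('r \<Rightarrow> 'm::ab_group_add \<Rightarrow> 'm) \<Rightarrow> (int \<times> int \<Rightarrow> 'm \<Rightarrow> 'm) \<Rightarrow> bool" where
  "graded_module pR scale p \<longleftrightarrow> module scale \<and> graded_decomp p \<and>
     (\<forall>g h r x. homog pR g r \<longrightarrow> homog p h x \<longrightarrow> homog p (g + h) (scale r x))"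

definition finite_filt_support :: "(int \<times> int \<Rightarrow> 'm::ab_group_add \<Rightarrow> 'm) \<Rightarrow> bool" where
  "finite_filt_support p \<longleftrightarrow> (\<exists>B. finite B \<and> (\<forall>a b x. b \<notin> B \<longrightarrow> p (a, b) x = 0))"

definition lin_hom ::
  "('r::comm_ring_1 \<Rightarrow> 'm::ab_group_add \<Rightarrow> 'm) \<Rightarrow> ('r \<Rightarrow> 'n::ab_group_add \<Rightarrow> 'n) \<Rightarrow>
   (int \<times> int \<Rightarrow> 'm \<Rightarrow> 'm) \<Rightarrow> (int \<times> int \<Rightarrow> 'n \<Rightarrow> 'n) \<Rightarrow> int \<times> int \<Rightarrow> ('m \<Rightarrow> 'n) \<Rightarrow> bool" where
  "lin_hom sm sn p q \<delta> f \<longleftrightarrow>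
     (\<forall>x y. f (x + y) = f x + f y) \<and> (\<forall>r x. f (sm r x) = sn r (f x)) \<and>
     (\<forall>g x. homog p g x \<longrightarrow> homog q (g + \<delta>) (f x))"

definition total :: "('i \<Rightarrow> 'm \<Rightarrow> 'n::comm_monoid_add) \<Rightarrow> 'm \<Rightarrow> 'n" where
  "total d x = (\<Sum>i\<in>{i. d i x \<noteq> 0}. d i x)"

definition multifact ::
  "('r::comm_ring_1 \<Rightarrow> 'm::ab_group_add \<Rightarrow> 'm) \<Rightarrow> (int \<times> int \<Rightarrow> 'm \<Rightarrow> 'm) \<Rightarrow> int \<Rightarrow> 'r \<Rightarrow> (nat \<Rightarrow> 'm \<Rightarrow> 'm) \<Rightarrow> bool" where
  "multifact scale p k w d \<longleftrightarrow>
     (\<forall>i. lin_hom scale scale p p (k, int i) (d i)) \<and>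
     (\<forall>x. finite {i. d i x \<noteq> 0}) \<and>
     (\<forall>x. total d (total d x) = scale w x)"

definition chain_map ::
  "('r::comm_ring_1 \<Rightarrow> 'm::ab_group_add \<Rightarrow> 'm) \<Rightarrow> ('r \<Rightarrow> 'n::ab_group_add \<Rightarrow> 'n) \<Rightarrow>
   (int \<times> int \<Rightarrow> 'm \<Rightarrow> 'm) \<Rightarrow> ('m \<Rightarrow> 'm) \<Rightarrow> (int \<times> int \<Rightarrow> 'n \<Rightarrow> 'n) \<Rightarrow> ('n \<Rightarrow> 'n) \<Rightarrow>
   (nat \<Rightarrow> 'm \<Rightarrow> 'n) \<Rightarrow> bool" where
  "chain_map sm sn p D q D' f \<longleftrightarrow>
     (\<forall>i. lin_hom sm sn p q (0, int i) (f i)) \<and>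
     (\<forall>x. finite {i. f i x \<noteq> 0}) \<and>
     (\<forall>x. total f (D x) = D' (total f x))"

definition mf_iso ::
  "('r::comm_ring_1 \<Rightarrow> 'm::ab_group_add \<Rightarrow> 'm) \<Rightarrow>
   (int \<times> int \<Rightarrow> 'm \<Rightarrow> 'm) \<Rightarrow> ('m \<Rightarrow> 'm) \<Rightarrow> (int \<times> int \<Rightarrow> 'm \<Rightarrow> 'm) \<Rightarrow> ('m \<Rightarrow> 'm) \<Rightarrow> bool" where
  "mf_iso scale p D q D' \<longleftrightarrow>
     (\<exists>f g. chain_map scale scale p D q D' f \<and> chain_map scale scale q D' p D g \<and>
        (\<forall>x. total g (total f x) = x) \<and> (\<forall>y. total f (total g y) = y))"

text \<open>m-homotopy between chain maps F, G: (C,d) -> (C',d') of matrix factorizations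
  (d of bidegree (k,0)): H = sum_{i >= -m} h_i, h_i of bidegree (-k,i), F - G = H d + d' H.\<close>
definition mf_homotopy ::
  "('r::comm_ring_1 \<Rightarrow> 'm::ab_group_add \<Rightarrow> 'm) \<Rightarrow> ('r \<Rightarrow> 'n::ab_group_add \<Rightarrow> 'n) \<Rightarrow>
   (int \<times> int \<Rightarrow> 'm \<Rightarrow> 'm) \<Rightarrow> ('m \<Rightarrow> 'm) \<Rightarrow> (int \<times> int \<Rightarrow> 'n \<Rightarrow> 'n) \<Rightarrow> ('n \<Rightarrow> 'n) \<Rightarrow>
   int \<Rightarrow> int \<Rightarrow> (nat \<Rightarrow> 'm \<Rightarrow> 'n) \<Rightarrow> (nat \<Rightarrow> 'm \<Rightarrow> 'n) \<Rightarrow> (int \<Rightarrow> 'm \<Rightarrow> 'n) \<Rightarrow> bool" where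
  "mf_homotopy sm sn p d q d' k m f g h \<longleftrightarrow>
     (\<forall>i. i < - m \<longrightarrow> h i = (\<lambda>x. 0)) \<and>
     (\<forall>i. lin_hom sm sn p q (- k, i) (h i)) \<and>
     (\<forall>x. finite {i. h i x \<noteq> 0}) \<and>
     (\<forall>x. total f x - total g x = total h (d x) + d' (total h x))"

definition mf_homotopic ::
  "('r::comm_ring_1 \<Rightarrow> 'm::ab_group_add \<Rightarrow> 'm) \<Rightarrow> ('r \<Rightarrow> 'n::ab_group_add \<Rightarrow> 'n) \<Rightarrow>
   (int \<times> int \<Rightarrow> 'm \<Rightarrow> 'm) \<Rightarrow> ('m \<Rightarrow> 'm) \<Rightarrow> (int \<times> int \<Rightarrow> 'n \<Rightarrow> 'n) \<Rightarrow> ('n \<Rightarrow> 'n) \<Rightarrow>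
   int \<Rightarrow> int \<Rightarrow> (nat \<Rightarrow> 'm \<Rightarrow> 'n) \<Rightarrow> (nat \<Rightarrow> 'm \<Rightarrow> 'n) \<Rightarrow> bool" where
  "mf_homotopic sm sn p d q d' k m f g \<longleftrightarrow> (\<exists>h. mf_homotopy sm sn p d q d' k m f g h)"

text \<open>Grading shift M{i,j}: degree (a,b) in M becomes (a+i,b+j).\<close>
definition shift_grading :: "(int \<times> int \<Rightarrow> 'm \<Rightarrow> 'm) \<Rightarrow> int \<times> int \<Rightarrow> int \<times> int \<Rightarrow> 'm \<Rightarrow> 'm" where
  "shift_grading p s = (\<lambda>g. p (g - s))"

text \<open>Koszul sign rule: an odd internal shift negates the differential.\<close>
definition shift_diff :: "int \<Rightarrow> ('m \<Rightarrow> 'm::ab_group_add) \<Rightarrow> 'm \<Rightarrow> 'm" where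
  "shift_diff i d = (if odd i then (\<lambda>x. - d x) else d)"

end

theory Submission
  imports Defs
begin

text \<open>Comparing components of filtration degree n in \<open>D\<^sup>2 = D'\<^sup>2 = w\<close>, all terms built from
  the common \<open>d\<^sub>i = d'\<^sub>i\<close> with \<open>0 < i < n\<close> cancel and what remains is
  \<open>d\<^sub>0 d\<^sub>n + d\<^sub>n d\<^sub>0 = d\<^sub>0 d'\<^sub>n + d'\<^sub>n d\<^sub>0\<close>: the difference \<open>d\<^sub>n - d'\<^sub>n\<close> anticommutes with
  \<open>d\<^sub>0\<close>, i.e. it is a chain map into the shift by the odd degree \<open>-k\<close>. The filtration
  degree n part of a 0-homotopy \<open>H\<close> from it to zero is a single map \<open>\<eta>\<close> with
  \<open>d\<^sub>n - d'\<^sub>n = \<eta> d\<^sub>0 - d\<^sub>0 \<eta>\<close>. As \<open>\<eta>\<close> raises the filtration degree and only finitely many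
  filtration degrees occur, \<open>\<eta>\<close> is nilpotent, so \<open>1 + \<eta>\<close> is an automorphism whose inverse is a
  finite geometric series. Conjugating \<open>D'\<close> by it gives an isomorphic multifactorization whose
  components below n are unchanged and whose degree n component is
  \<open>d'\<^sub>n + \<eta> d\<^sub>0 - d\<^sub>0 \<eta> = d\<^sub>n\<close>.\<close>

lemma lin_hom_additive: "lin_hom sm sn p q \<delta> f \<Longrightarrow> additive f"
  unfolding lin_hom_def additive_def by blast

lemma lin_hom_scale: "lin_hom sm sn p q \<delta> f \<Longrightarrow> f (sm r x) = sn r (f x)"
  unfolding lin_hom_def by blast

lemma lin_hom_homog: "lin_hom sm sn p q \<delta> f \<Longrightarrow> homog p g x \<Longrightarrow> homog q (g + \<delta>) (f x)"
  unfolding lin_hom_def by blast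

lemma graded_decomp_additive: "graded_decomp p \<Longrightarrow> additive (p g)"
  unfolding graded_decomp_def additive_def by blast

lemma homog_component: "graded_decomp p \<Longrightarrow> homog p g (p g x)"
  unfolding graded_decomp_def homog_def by (metis (full_types))

lemma homog_proj: "graded_decomp p \<Longrightarrow> homog p h y \<Longrightarrow> p g y = (if g = h then y else 0)"
  unfolding graded_decomp_def homog_def by metis

lemma homog_zero: "graded_decomp p \<Longrightarrow> homog p g 0"
  unfolding homog_def by (rule additive.zero[OF graded_decomp_additive])

lemma homog_uminus: "graded_decomp p \<Longrightarrow> homog p g x \<Longrightarrow> homog p g (- x)"
  unfolding homog_def by (simp add: additive.minus[OF graded_decomp_additive])

lemma homog_diff: "graded_decomp p \<Longrightarrow> homog p g x \<Longrightarrow> homog p g y \<Longrightarrow> homog p g (x - y)"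
  unfolding homog_def by (simp add: additive.diff[OF graded_decomp_additive])

lemma homog_sum:
  assumes "graded_decomp p" "\<And>i. i \<in> S \<Longrightarrow> homog p g (y i)"
  shows "homog p g (\<Sum>i\<in>S. y i)"
  using assms(2) unfolding homog_def by (simp add: additive.sum[OF graded_decomp_additive[OF assms(1)]])

lemma homog_shift_grading: "homog (shift_grading p s) g x \<longleftrightarrow> homog p (g - s) x"
  unfolding homog_def shift_grading_def ..

lemma additive_eq_if_eq_on_homog:
  assumes gd: "graded_decomp p" and "additive T" "additive S"
    and "\<And>g x. homog p g x \<Longrightarrow> T x = S x"
  shows "T x = S x"
proof -
  have x: "x = (\<Sum>g\<in>{g. p g x \<noteq> 0}. p g x)" using gd unfolding graded_decomp_def by blast
  have "T x = (\<Sum>g\<in>{g. p g x \<noteq> 0}. T (p g x))" by (subst x) (rule additive.sum[OF assms(2)])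
  also have "\<dots> = (\<Sum>g\<in>{g. p g x \<noteq> 0}. S (p g x))"
    by (rule sum.cong) (auto intro: assms(4) homog_component[OF gd])
  also have "\<dots> = S x" by (subst (2) x) (rule additive.sum[OF assms(3), symmetric])
  finally show ?thesis .
qed

lemma lin_hom_zero: "(\<And>g. homog q g 0) \<Longrightarrow> module sn \<Longrightarrow> lin_hom sm sn p q \<delta> (\<lambda>x. 0)"
  unfolding lin_hom_def by (simp add: module.scale_zero_right)

lemma lin_hom_id: "lin_hom s s p p 0 (\<lambda>x. x)"
  unfolding lin_hom_def by simp

lemma lin_hom_comp:
  "lin_hom s s p p \<delta>\<^sub>1 f \<Longrightarrow> lin_hom s s p p \<delta>\<^sub>2 g \<Longrightarrow> lin_hom s s p p (\<delta>\<^sub>2 + \<delta>\<^sub>1) (\<lambda>x. f (g x))"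
  unfolding lin_hom_def by (metis add.assoc)

lemma lin_hom_diff:
  "graded_decomp q \<Longrightarrow> module sn \<Longrightarrow> lin_hom sm sn p q \<delta> f \<Longrightarrow> lin_hom sm sn p q \<delta> g \<Longrightarrow>
    lin_hom sm sn p q \<delta> (\<lambda>x. f x - g x)"
  unfolding lin_hom_def by (simp add: homog_diff module.scale_right_diff_distrib algebra_simps)

lemma lin_hom_uminus:
  "graded_decomp q \<Longrightarrow> module sn \<Longrightarrow> lin_hom sm sn p q \<delta> f \<Longrightarrow> lin_hom sm sn p q \<delta> (\<lambda>x. - f x)"
  unfolding lin_hom_def by (simp add: homog_uminus module.scale_minus_right)

lemma lin_hom_sum:
  assumes "graded_decomp q" "module sn" "\<And>i. i \<in> S \<Longrightarrow> lin_hom sm sn p q \<delta> (f i)"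
  shows "lin_hom sm sn p q \<delta> (\<lambda>x. \<Sum>i\<in>S. f i x)"
  using assms(3) unfolding lin_hom_def
  by (simp add: sum.distrib module.scale_sum_right[OF assms(2)] homog_sum[OF assms(1)])

lemma lin_hom_funpow:
  assumes "lin_hom s s p p (a, c) f"
  shows "lin_hom s s p p (int b * a, int b * c) (f ^^ b)"
proof (induction b)
  case 0
  show ?case using lin_hom_id by (simp add: id_def zero_prod_def)
next
  case (Suc b)
  have "lin_hom s s p p ((int b * a, int b * c) + (a, c)) (\<lambda>x. f ((f ^^ b) x))"
    by (rule lin_hom_comp[OF assms Suc])
  then show ?case by (simp add: algebra_simps)
qed

lemma lin_hom_shift_grading:
  "lin_hom sm sn p (shift_grading q s) \<delta> f \<longleftrightarrow> lin_hom sm sn p q (\<delta> - s) f"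
  unfolding lin_hom_def homog_shift_grading by (simp add: add_diff_eq)

lemma total_eq_sum: "finite S \<Longrightarrow> {i. d i x \<noteq> 0} \<subseteq> S \<Longrightarrow> total d x = (\<Sum>i\<in>S. d i x)"
  unfolding total_def by (rule sum.mono_neutral_left) auto

lemma total_concentrated: "total (\<lambda>i. if i = n then f else (\<lambda>x. 0)) x = f x"
  by (subst total_eq_sum[of "{n}"]) auto

lemma proj_total:
  assumes gd: "graded_decomp p" and fin: "finite {i. e i x \<noteq> 0}"
    and hom: "\<And>i. homog p (\<delta> i) (e i x)" and inj: "inj \<delta>"
  shows "p (\<delta> m) (total e x) = e m x"
proof -
  let ?S = "insert m {i. e i x \<noteq> 0}"
  have "total e x = (\<Sum>i\<in>?S. e i x)" using fin by (intro total_eq_sum) auto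
  then have "p (\<delta> m) (total e x) = (\<Sum>i\<in>?S. p (\<delta> m) (e i x))"
    by (simp add: additive.sum[OF graded_decomp_additive[OF gd]])
  also have "\<dots> = (\<Sum>i\<in>?S. if i = m then e m x else 0)"
    using inj by (intro sum.cong) (auto simp: homog_proj[OF gd hom] dest: injD)
  also have "\<dots> = e m x" using fin by simp
  finally show ?thesis .
qed

lemma additive_total:
  assumes "additive f" "finite {i. h i x \<noteq> 0}"
  shows "f (total h x) = total (\<lambda>i y. f (h i y)) x"
proof -
  have "total (\<lambda>i y. f (h i y)) x = (\<Sum>i\<in>{i. h i x \<noteq> 0}. f (h i x))"
    using assms by (intro total_eq_sum) (auto simp: additive.zero)
  then show ?thesis unfolding total_def[of h] by (simp add: additive.sum[OF assms(1)])
qed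

lemma total_scale:
  assumes "module s'" "\<And>i. f i (s r x) = s' r (f i x)" "finite {i. f i x \<noteq> 0}"
  shows "total f (s r x) = s' r (total f x)"
proof -
  have "total f (s r x) = (\<Sum>i\<in>{i. f i x \<noteq> 0}. s' r (f i x))"
    using assms by (subst total_eq_sum) (auto simp: module.scale_zero_right)
  then show ?thesis unfolding total_def[of f x] by (simp add: module.scale_sum_right[OF assms(1)])
qed

lemma component_eq_if_total_eq:
  assumes gd: "graded_decomp p"
    and e: "\<And>i. lin_hom s s p p (c, int i) (e i)" and e': "\<And>i. lin_hom s s p p (c, int i) (e' i)"
    and fin: "\<And>x. finite {i. e i x \<noteq> 0}" and fin': "\<And>x. finite {i. e' i x \<noteq> 0}"
    and eq: "\<And>x. total e x = total e' x"
  shows "e m = e' m"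
proof
  fix x
  show "e m x = e' m x"
  proof (rule additive_eq_if_eq_on_homog[OF gd lin_hom_additive[OF e] lin_hom_additive[OF e']])
    fix g x assume x: "homog p g x"
    define \<delta> where "\<delta> i = g + (c, int i)" for i
    have "inj \<delta>" unfolding \<delta>_def by (rule injI) simp
    then have "p (\<delta> m) (total e x) = e m x" "p (\<delta> m) (total e' x) = e' m x"
      using proj_total[OF gd, of e x \<delta>] proj_total[OF gd, of e' x \<delta>] fin fin'
        lin_hom_homog[OF e x] lin_hom_homog[OF e' x] unfolding \<delta>_def by blast+
    then show "e m x = e' m x" by (simp add: eq)
  qed
qed

subsection \<open>Composition of families\<close>

definition conv :: "(nat \<Rightarrow> 'm \<Rightarrow> 'm::ab_group_add) \<Rightarrow> (nat \<Rightarrow> 'm \<Rightarrow> 'm) \<Rightarrow> nat \<Rightarrow> 'm \<Rightarrow> 'm" where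
  "conv f g m x = (\<Sum>i\<le>m. f i (g (m - i) x))"

lemma lin_hom_conv:
  assumes "graded_decomp p" "module s"
    and "\<And>i. lin_hom s s p p (c\<^sub>1, int i) (f i)" "\<And>j. lin_hom s s p p (c\<^sub>2, int j) (g j)"
  shows "lin_hom s s p p (c\<^sub>1 + c\<^sub>2, int m) (conv f g m)"
proof -
  have "lin_hom s s p p (c\<^sub>1 + c\<^sub>2, int m) (\<lambda>x. f i (g (m - i) x))" if "i \<in> {..m}" for i
    using lin_hom_comp[OF assms(3) assms(4), of "m - i" i] that by (simp add: of_nat_diff add.commute)
  then show ?thesis unfolding conv_def[abs_def] by (rule lin_hom_sum[OF assms(1,2)])
qed

lemma conv_support_bound:
  fixes f g :: "nat \<Rightarrow> 'm::ab_group_add \<Rightarrow> 'm"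
  assumes add: "\<And>i. additive (f i)" and fin_f: "\<And>y. finite {i. f i y \<noteq> 0}"
    and fin_g: "finite {j. g j x \<noteq> 0}"
  obtains K where "\<And>j. K < j \<Longrightarrow> g j x = 0" and "\<And>i j. K < i \<Longrightarrow> f i (g j x) = 0"
proof -
  let ?T = "{j. g j x \<noteq> 0}"
  let ?S = "\<Union>j\<in>?T. {i. f i (g j x) \<noteq> 0}"
  have fin: "finite (?S \<union> ?T)" using fin_f fin_g by simp
  define K where "K = Max (?S \<union> ?T)"
  have K: "i \<le> K" if "i \<in> ?S \<union> ?T" for i unfolding K_def using fin that by (rule Max_ge)
  show thesis
  proof
    show "g j x = 0" if "K < j" for j
    proof (rule ccontr)
      assume "g j x \<noteq> 0"
      then have "j \<le> K" by (intro K) simp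
      with that show False by simp
    qed
    show "f i (g j x) = 0" if "K < i" for i j
    proof (rule ccontr)
      assume fg: "f i (g j x) \<noteq> 0"
      then have "g j x \<noteq> 0" by (auto simp: additive.zero[OF add])
      with fg have "i \<le> K" by (intro K) auto
      with that show False by simp
    qed
  qed
qed

lemma total_conv:
  assumes add: "\<And>i. additive (f i)" and fin_f: "\<And>y. finite {i. f i y \<noteq> 0}"
    and fin_g: "finite {j. g j x \<noteq> 0}"
  shows "finite {m. conv f g m x \<noteq> 0}" and "total (conv f g) x = total f (total g x)"
proof -
  obtain K where g0: "\<And>j. K < j \<Longrightarrow> g j x = 0" and fg0: "\<And>i j. K < i \<Longrightarrow> f i (g j x) = 0"
    using conv_support_bound[of f g x] add fin_f fin_g by blast
  have fg0': "f i (g j x) = 0" if "K < j" for i j using g0[OF that] by (simp add: additive.zero[OF add])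
  have fg_outside: "f i (g j x) = 0" if "\<not> (i \<le> K \<and> j \<le> K)" for i j
    using that fg0 fg0' by (auto simp: not_le)
  have supp: "{m. conv f g m x \<noteq> 0} \<subseteq> {..K + K}"
  proof (rule subsetI, rule ccontr)
    fix m assume m: "m \<in> {m. conv f g m x \<noteq> 0}" "m \<notin> {..K + K}"
    have "conv f g m x = 0"
      unfolding conv_def using m(2) by (intro sum.neutral ballI fg_outside) auto
    then show False using m(1) by simp
  qed
  then show "finite {m. conv f g m x \<noteq> 0}" by (rule finite_subset) simp
  have total_g: "total g x = (\<Sum>j\<le>K. g j x)" using g0 by (intro total_eq_sum) (auto intro: ccontr simp: not_le)
  have f_total_g: "f i (total g x) = (\<Sum>j\<le>K. f i (g j x))" for i
    unfolding total_g by (rule additive.sum[OF add])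
  have "total (conv f g) x = (\<Sum>m\<le>K + K. conv f g m x)" using supp by (intro total_eq_sum) auto
  also have "\<dots> = (\<Sum>(i, j)\<in>{(i, j). i + j \<le> K + K}. f i (g j x))"
    unfolding conv_def by (rule sum.triangle_reindex_eq[symmetric])
  also have "\<dots> = (\<Sum>(i, j)\<in>{..K} \<times> {..K}. f i (g j x))"
  proof (rule sum.mono_neutral_right)
    show "finite {(i, j). i + j \<le> K + K}"
      by (rule finite_subset[of _ "{..K + K} \<times> {..K + K}"]) auto
    show "\<forall>ij\<in>{(i, j). i + j \<le> K + K} - {..K} \<times> {..K}. (case ij of (i, j) \<Rightarrow> f i (g j x)) = 0"
      using fg_outside by auto
  qed auto
  also have "\<dots> = (\<Sum>i\<le>K. f i (total g x))"
    unfolding f_total_g by (rule sum.cartesian_product[symmetric])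
  also have "\<dots> = total f (total g x)"
  proof (rule total_eq_sum[symmetric])
    show "{i. f i (total g x) \<noteq> 0} \<subseteq> {..K}"
      using fg0 by (auto intro: ccontr simp: f_total_g not_le)
  qed simp
  finally show "total (conv f g) x = total f (total g x)" .
qed

lemma conv_id_left_below:
  assumes "f 0 = (\<lambda>x. x)" and "\<And>i. 0 < i \<Longrightarrow> i < m \<Longrightarrow> f i = (\<lambda>x. 0)"
  shows "conv f g m x = g m x + (if m = 0 then 0 else f m (g 0 x))"
proof (cases "m = 0")
  case False
  then have "{..m} = insert 0 (insert m {0<..<m})" by auto
  then show ?thesis using False assms by (simp add: conv_def)
qed (simp add: conv_def assms)

lemma conv_id_right_below:
  assumes "g 0 = (\<lambda>x. x)" and "\<And>j. 0 < j \<Longrightarrow> j < m \<Longrightarrow> g j = (\<lambda>x. 0)"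
    and "\<And>i. additive (f i)"
  shows "conv f g m x = f m x + (if m = 0 then 0 else f 0 (g m x))"
proof (cases "m = 0")
  case False
  then have "{..m} = insert 0 (insert m {0<..<m})" by auto
  moreover have "f i (g (m - i) x) = 0" if "i \<in> {0<..<m}" for i
    using that assms(2)[of "m - i"] by (simp add: additive.zero[OF assms(3)])
  ultimately show ?thesis using False assms(1) by (simp add: conv_def)
qed (simp add: conv_def assms)

subsection \<open>Nilpotence in positive filtration degree\<close>

lemma additive_funpow:
  fixes f :: "'a::ab_group_add \<Rightarrow> 'a"
  assumes "additive f"
  shows "additive (f ^^ n)"
  by (induction n) (use assms in \<open>simp_all add: additive_def\<close>)

lemma funpow_vanishes_beyond:
  fixes f :: "'a::ab_group_add \<Rightarrow> 'a"
  assumes "additive f" "\<And>x. (f ^^ N) x = 0" "N \<le> b"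
  shows "(f ^^ b) x = 0"
proof -
  have "(f ^^ b) x = (f ^^ (b - N)) ((f ^^ N) x)"
    using assms(3) by (metis funpow_add le_add_diff_inverse2 o_apply)
  then show ?thesis by (simp add: assms(2) additive.zero[OF additive_funpow[OF assms(1)]])
qed

lemma geometric_series_inverse:
  assumes add: "additive \<nu>" and nil: "\<And>x. (\<nu> ^^ N) x = 0"
  shows "(\<Sum>b<N. (\<nu> ^^ b) y) - \<nu> (\<Sum>b<N. (\<nu> ^^ b) y) = y"
    and "(\<Sum>b<N. (\<nu> ^^ b) (y - \<nu> y)) = y"
proof -
  have telescope: "(\<Sum>b<N. (\<nu> ^^ b) y - (\<nu> ^^ Suc b) y) = y"
    using sum_lessThan_telescope'[of "\<lambda>b. (\<nu> ^^ b) y" N] by (simp add: nil)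
  show "(\<Sum>b<N. (\<nu> ^^ b) y) - \<nu> (\<Sum>b<N. (\<nu> ^^ b) y) = y"
    using telescope by (simp add: additive.sum[OF add] sum_subtractf)
  have "(\<nu> ^^ b) (y - \<nu> y) = (\<nu> ^^ b) y - (\<nu> ^^ Suc b) y" for b
    by (simp add: additive.diff[OF additive_funpow[OF add]] funpow_Suc_right del: funpow.simps)
  then show "(\<Sum>b<N. (\<nu> ^^ b) (y - \<nu> y)) = y" using telescope by simp
qed

lemma filtration_raising_nilpotent:
  assumes gd: "graded_decomp p" and fs: "finite_filt_support p"
    and \<nu>: "lin_hom s s p p (0, int n) \<nu>" and n: "n \<ge> 1"
  obtains N where "\<And>x. (\<nu> ^^ N) x = 0"
proof -
  obtain B where B: "finite B" "\<And>a b x. b \<notin> B \<Longrightarrow> p (a, b) x = 0"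
    using fs unfolding finite_filt_support_def by blast
  define M where "M = Max (insert 0 (abs ` B))"
  have M: "\<bar>b\<bar> \<le> M" if "b \<in> B" for b unfolding M_def using B(1) that by simp
  have "M \<ge> 0" unfolding M_def using B(1) by simp
  define N where "N = nat (2 * M) + 1"
  have "(\<nu> ^^ N) x = 0" for x
  proof (rule additive_eq_if_eq_on_homog[OF gd additive_funpow[OF lin_hom_additive[OF \<nu>]]])
    show "additive (\<lambda>x. 0)" by (simp add: additive_def)
    fix g x assume x: "homog p g x"
    obtain a b where g: "g = (a, b)" by fastforce
    have "homog p (a, b + int N * int n) ((\<nu> ^^ N) x)"
      using lin_hom_homog[OF lin_hom_funpow[OF \<nu>, of N] x] g by simp
    moreover have "b + int N * int n \<notin> B" if "b \<in> B"
    proof -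
      have "N * 1 \<le> N * n" using n by (rule mult_le_mono2)
      then have "int N * int n \<ge> int N" by (metis mult_1_right of_nat_le_iff of_nat_mult)
      then show ?thesis using M[OF that] M[of "b + int N * int n"] \<open>M \<ge> 0\<close> unfolding N_def by linarith
    qed
    ultimately show "(\<nu> ^^ N) x = 0"
      using x B(2) g unfolding homog_def
      by (cases "b \<in> B") (metis additive.zero[OF additive_funpow[OF lin_hom_additive[OF \<nu>]]])+
  qed
  then show thesis by (rule that)
qed

subsection \<open>Conjugation of multifactorizations\<close>

definition one_minus_family :: "nat \<Rightarrow> ('m \<Rightarrow> 'm) \<Rightarrow> nat \<Rightarrow> 'm \<Rightarrow> 'm::ab_group_add" where
  "one_minus_family n \<nu> i = (if i = 0 then (\<lambda>x. x) else if i = n then (\<lambda>x. - \<nu> x) else (\<lambda>x. 0))"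

definition powers_family :: "nat \<Rightarrow> ('m \<Rightarrow> 'm) \<Rightarrow> nat \<Rightarrow> 'm \<Rightarrow> 'm::zero" where
  "powers_family n \<nu> i = (if n dvd i then \<nu> ^^ (i div n) else (\<lambda>x. 0))"

lemma lin_hom_one_minus_family:
  assumes "graded_decomp p" "module s" "lin_hom s s p p (0, int n) \<nu>"
  shows "lin_hom s s p p (0, int i) (one_minus_family n \<nu> i)"
proof -
  have "lin_hom s s p p \<delta> (\<lambda>x. 0)" for \<delta> by (rule lin_hom_zero[OF homog_zero[OF assms(1)] assms(2)])
  then show ?thesis
    using lin_hom_id[of s p] lin_hom_uminus[OF assms] by (simp add: one_minus_family_def zero_prod_def)
qed

lemma lin_hom_powers_family:
  assumes "graded_decomp p" "module s" "lin_hom s s p p (0, int n) \<nu>"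
  shows "lin_hom s s p p (0, int i) (powers_family n \<nu> i)"
proof (cases "n dvd i")
  case True
  then have "int (i div n) * int n = int i" by (metis dvd_div_mult_self of_nat_mult)
  then show ?thesis using True lin_hom_funpow[OF assms(3), of "i div n"] by (simp add: powers_family_def)
qed (simp add: powers_family_def lin_hom_zero[OF homog_zero[OF assms(1)] assms(2)])

lemma total_one_minus_family:
  assumes "n \<ge> 1"
  shows "finite {i. one_minus_family n \<nu> i y \<noteq> 0}" and "total (one_minus_family n \<nu>) y = y - \<nu> y"
proof -
  have supp: "{i. one_minus_family n \<nu> i y \<noteq> 0} \<subseteq> {0, n}" by (auto simp: one_minus_family_def)
  then show "finite {i. one_minus_family n \<nu> i y \<noteq> 0}" by (rule finite_subset) simp
  show "total (one_minus_family n \<nu>) y = y - \<nu> y"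
    using assms by (subst total_eq_sum[of "{0, n}"]) (use supp in \<open>auto simp: one_minus_family_def\<close>)
qed

lemma total_powers_family:
  assumes n: "n \<ge> 1" and add: "additive \<nu>" and nil: "\<And>x. (\<nu> ^^ N) x = 0"
  shows "finite {i. powers_family n \<nu> i y \<noteq> 0}"
    and "total (powers_family n \<nu>) y = (\<Sum>b<N. (\<nu> ^^ b) y)"
proof -
  have supp: "{i. powers_family n \<nu> i y \<noteq> 0} \<subseteq> (\<lambda>b. b * n) ` {..<N}"
  proof
    fix i assume "i \<in> {i. powers_family n \<nu> i y \<noteq> 0}"
    then have "n dvd i" "(\<nu> ^^ (i div n)) y \<noteq> 0" by (auto simp: powers_family_def split: if_splits)
    then have "i = i div n * n" "i div n < N"
      using funpow_vanishes_beyond[OF add nil, of "i div n" y] by force+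
    then show "i \<in> (\<lambda>b. b * n) ` {..<N}" by blast
  qed
  then show "finite {i. powers_family n \<nu> i y \<noteq> 0}" by (rule finite_subset) simp
  have "inj_on (\<lambda>b. b * n) {..<N}" using n by (auto simp: inj_on_def)
  then show "total (powers_family n \<nu>) y = (\<Sum>b<N. (\<nu> ^^ b) y)"
    using n by (subst total_eq_sum[of "(\<lambda>b. b * n) ` {..<N}"])
      (use supp in \<open>auto simp: sum.reindex powers_family_def\<close>)
qed

lemma multifact_conjugate:
  assumes gd: "graded_decomp p" and md: "module scale" and d: "multifact scale p k w d"
    and \<phi>: "\<And>i. lin_hom scale scale p p (0, int i) (\<phi> i)" "\<And>x. finite {i. \<phi> i x \<noteq> 0}"
    and \<psi>: "\<And>i. lin_hom scale scale p p (0, int i) (\<psi> i)" "\<And>x. finite {i. \<psi> i x \<noteq> 0}"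
    and \<phi>\<psi>: "\<And>x. total \<phi> (total \<psi> x) = x" and \<psi>\<phi>: "\<And>x. total \<psi> (total \<phi> x) = x"
  shows "multifact scale p k w (conv \<phi> (conv d \<psi>))"
    and "mf_iso scale p (total (conv \<phi> (conv d \<psi>))) p (total d)"
proof -
  have dl: "\<And>i. lin_hom scale scale p p (k, int i) (d i)" and d_fin: "\<And>x. finite {i. d i x \<noteq> 0}"
    and d_sq: "\<And>x. total d (total d x) = scale w x"
    using d unfolding multifact_def by blast+
  have e_fin: "finite {m. conv d \<psi> m x \<noteq> 0}" and e_total: "total (conv d \<psi>) x = total d (total \<psi> x)" for x
    using total_conv[of d \<psi> x] lin_hom_additive[OF dl] d_fin \<psi>(2) by blast+
  have fin: "finite {m. conv \<phi> (conv d \<psi>) m x \<noteq> 0}"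
    and D: "total (conv \<phi> (conv d \<psi>)) x = total \<phi> (total d (total \<psi> x))" for x
    using total_conv[of \<phi> "conv d \<psi>" x] lin_hom_additive[OF \<phi>(1)] \<phi>(2) e_fin e_total by auto
  have lin: "lin_hom scale scale p p (k, int m) (conv \<phi> (conv d \<psi>) m)" for m
    using lin_hom_conv[OF gd md \<phi>(1) lin_hom_conv[OF gd md dl \<psi>(1)]] by simp
  have \<phi>_scale: "total \<phi> (scale w x) = scale w (total \<phi> x)" for x
    using md lin_hom_scale[OF \<phi>(1)] \<phi>(2) by (rule total_scale)
  show "multifact scale p k w (conv \<phi> (conv d \<psi>))"
    unfolding multifact_def using lin fin by (simp add: D \<psi>\<phi> d_sq \<phi>_scale \<phi>\<psi>)
  show "mf_iso scale p (total (conv \<phi> (conv d \<psi>))) p (total d)"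
    unfolding mf_iso_def chain_map_def using \<phi> \<psi> \<phi>\<psi> \<psi>\<phi> by (intro exI[of _ \<psi>] exI[of _ \<phi>]) (simp add: D)
qed

lemma multifact_gauge_transform:
  assumes gd: "graded_decomp p" and md: "module scale" and fs: "finite_filt_support p"
    and d: "multifact scale p k w d" and n: "n \<ge> 1" and \<nu>: "lin_hom scale scale p p (0, int n) \<nu>"
  obtains d'' where "multifact scale p k w d''" and "mf_iso scale p (total d'') p (total d)"
    and "\<And>m. m < n \<Longrightarrow> d'' m = d m" and "\<And>x. d'' n x = d n x + d 0 (\<nu> x) - \<nu> (d 0 x)"
proof -
  have \<nu>_add: "additive \<nu>" by (rule lin_hom_additive[OF \<nu>])
  have d_add: "additive (d i)" for i using d unfolding multifact_def by (blast intro: lin_hom_additive)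
  obtain N where nil: "\<And>x. (\<nu> ^^ N) x = 0" using filtration_raising_nilpotent[OF gd fs \<nu> n] by blast
  let ?\<Phi> = "one_minus_family n \<nu>" and ?\<Psi> = "powers_family n \<nu>"
  note \<Phi>_total = total_one_minus_family[OF n] and \<Psi>_total = total_powers_family[OF n \<nu>_add nil]
  have conj: "multifact scale p k w (conv ?\<Phi> (conv d ?\<Psi>))"
    "mf_iso scale p (total (conv ?\<Phi> (conv d ?\<Psi>))) p (total d)"
    using multifact_conjugate[OF gd md d lin_hom_one_minus_family[OF gd md \<nu>] \<Phi>_total(1)
        lin_hom_powers_family[OF gd md \<nu>] \<Psi>_total(1)]
    by (simp_all add: \<Phi>_total(2) \<Psi>_total(2) geometric_series_inverse[OF \<nu>_add nil])
  have \<Phi>_low: "?\<Phi> 0 = (\<lambda>x. x)" "\<And>i. 0 < i \<Longrightarrow> i < n \<Longrightarrow> ?\<Phi> i = (\<lambda>x. 0)"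
    by (auto simp: one_minus_family_def)
  have \<Psi>_low: "?\<Psi> 0 = (\<lambda>x. x)" "\<And>j. 0 < j \<Longrightarrow> j < n \<Longrightarrow> ?\<Psi> j = (\<lambda>x. 0)" "?\<Psi> n = \<nu>"
    using n by (auto simp: powers_family_def dest: dvd_imp_le)
  have e: "conv d ?\<Psi> m x = d m x + (if m = 0 then 0 else d 0 (?\<Psi> m x))" if "m \<le> n" for m x
    using that by (intro conv_id_right_below \<Psi>_low(1) d_add) (auto intro: \<Psi>_low(2))
  have d'': "conv ?\<Phi> (conv d ?\<Psi>) m x = conv d ?\<Psi> m x + (if m = 0 then 0 else ?\<Phi> m (conv d ?\<Psi> 0 x))"
    if "m \<le> n" for m x
    using that by (intro conv_id_left_below \<Phi>_low(1)) (auto intro: \<Phi>_low(2))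
  show thesis
  proof (rule that[OF conj])
    show "conv ?\<Phi> (conv d ?\<Psi>) m = d m" if "m < n" for m
      using that by (auto simp: d'' e \<Phi>_low(2) \<Psi>_low(2) additive.zero[OF d_add])
    show "conv ?\<Phi> (conv d ?\<Psi>) n x = d n x + d 0 (\<nu> x) - \<nu> (d 0 x)" for x
      using n by (simp add: d'' e \<Psi>_low(3) one_minus_family_def)
  qed
qed

subsection \<open>Components of the squared differential and of homotopies\<close>

lemma multifact_conv_square_eq:
  assumes gd: "graded_decomp p" and md: "module scale"
    and d: "multifact scale p k w d" and d': "multifact scale p k w d'"
  shows "conv d d m = conv d' d' m"
proof -
  have dl: "\<And>i. lin_hom scale scale p p (k, int i) (d i)" and d_fin: "\<And>x. finite {i. d i x \<noteq> 0}"
    and d_sq: "\<And>x. total d (total d x) = scale w x"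
    and d'l: "\<And>i. lin_hom scale scale p p (k, int i) (d' i)" and d'_fin: "\<And>x. finite {i. d' i x \<noteq> 0}"
    and d'_sq: "\<And>x. total d' (total d' x) = scale w x"
    using d d' unfolding multifact_def by blast+
  note sq = total_conv[of d d, OF lin_hom_additive[OF dl] d_fin d_fin]
    and sq' = total_conv[of d' d', OF lin_hom_additive[OF d'l] d'_fin d'_fin]
  show ?thesis
    by (rule component_eq_if_total_eq[OF gd lin_hom_conv[OF gd md dl dl] lin_hom_conv[OF gd md d'l d'l]])
      (simp_all add: sq sq' d_sq d'_sq)
qed

lemma multifact_first_difference_anticommutes:
  assumes gd: "graded_decomp p" and md: "module scale"
    and d: "multifact scale p k w d" and d': "multifact scale p k w d'"
    and n: "n \<ge> 1" and agree: "\<forall>i<n. d i = d' i"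
  shows "d n (d 0 x) - d' n (d 0 x) = - d 0 (d n x - d' n x)"
proof -
  have "{..n} = insert 0 (insert n {0<..<n})" using n by auto
  then have split: "conv e e n x = e 0 (e n x) + e n (e 0 x) + (\<Sum>i\<in>{0<..<n}. e i (e (n - i) x))"
    for e :: "nat \<Rightarrow> 'a \<Rightarrow> 'a" using n by (simp add: conv_def add.assoc)
  have "(\<Sum>i\<in>{0<..<n}. d i (d (n - i) x)) = (\<Sum>i\<in>{0<..<n}. d' i (d' (n - i) x))"
    using agree by (intro sum.cong) auto
  moreover have "d' 0 = d 0" using agree n by simp
  ultimately have "d 0 (d n x) + d n (d 0 x) = d 0 (d' n x) + d' n (d 0 x)"
    using multifact_conv_square_eq[OF gd md d d', of n] split[of d] split[of d'] by simp
  moreover have "additive (d 0)" using d unfolding multifact_def by (blast intro: lin_hom_additive)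
  ultimately show ?thesis by (simp add: additive.diff algebra_simps)
qed

lemma commutator_component:
  fixes h :: "int \<Rightarrow> 'm \<Rightarrow> 'm::ab_group_add"
  assumes gd: "graded_decomp p" and \<delta>: "lin_hom s s p p (k, 0) \<delta>"
    and h: "\<And>i. lin_hom s s p p (0, i) (h i)" "\<And>x. finite {i. h i x \<noteq> 0}"
    and T: "lin_hom s s p p (k, n) T" and eq: "\<And>x. T x = total h (\<delta> x) - \<delta> (total h x)"
  shows "T x = h n (\<delta> x) - \<delta> (h n x)"
proof (rule additive_eq_if_eq_on_homog[OF gd lin_hom_additive[OF T]])
  have "additive \<delta>" "additive (h n)" using \<delta> h(1) by (auto intro: lin_hom_additive)
  then show "additive (\<lambda>x. h n (\<delta> x) - \<delta> (h n x))" by (simp add: additive_def additive.add)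
  fix g x assume x: "homog p g x"
  define pos where "pos i = g + (k, i)" for i
  have inj: "inj pos" unfolding pos_def by (rule injI) simp
  have "homog p (pos i) (h i (\<delta> x))" for i
    using lin_hom_homog[OF h(1) lin_hom_homog[OF \<delta> x]] by (simp add: pos_def add.assoc)
  then have total_h: "p (pos n) (total h (\<delta> x)) = h n (\<delta> x)" by (rule proj_total[OF gd h(2) _ inj])
  have "homog p (pos i) (\<delta> (h i x))" for i
    using lin_hom_homog[OF \<delta> lin_hom_homog[OF h(1) x]] by (simp add: pos_def add.assoc)
  moreover have "finite {i. \<delta> (h i x) \<noteq> 0}"
    using h(2)[of x] by (rule finite_subset[rotated]) (auto simp: additive.zero[OF lin_hom_additive[OF \<delta>]])
  ultimately have \<delta>_total: "p (pos n) (\<delta> (total h x)) = \<delta> (h n x)"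
    using proj_total[OF gd _ _ inj, of "\<lambda>i y. \<delta> (h i y)" x]
    by (simp add: additive_total[OF lin_hom_additive[OF \<delta>] h(2)])
  have "homog p (pos n) (T x)" using lin_hom_homog[OF T x] by (simp add: pos_def)
  then have "T x = p (pos n) (total h (\<delta> x) - \<delta> (total h x))" by (simp add: homog_def eq)
  then show "T x = h n (\<delta> x) - \<delta> (h n x)"
    by (simp add: additive.diff[OF graded_decomp_additive[OF gd]] total_h \<delta>_total)
qed

lemma chain_map_concentrated:
  assumes "\<And>g. homog q g 0" "module sn" "lin_hom sm sn p q (0, int n) f" "\<And>x. f (D x) = D' (f x)"
  shows "chain_map sm sn p D q D' (\<lambda>i. if i = n then f else (\<lambda>x. 0))"
  unfolding chain_map_def using assms lin_hom_zero[OF assms(1,2), of sm p]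
  by (auto simp: total_concentrated intro: finite_subset[of _ "{n}"])

lemma mf_homotopic_concentrated_zero:
  assumes "mf_homotopic sm sn p \<delta> (shift_grading q (- k, 0)) \<delta>' k 0
    (\<lambda>i. if i = n then f else (\<lambda>x. 0)) (\<lambda>i x. 0)"
  obtains h where "\<And>i. lin_hom sm sn p q (0, i) (h i)" and "\<And>x. finite {i. h i x \<noteq> 0}"
    and "\<And>x. f x = total h (\<delta> x) + \<delta>' (total h x)"
  using assms unfolding mf_homotopic_def mf_homotopy_def lin_hom_shift_grading
  by (auto simp: total_concentrated total_def)

lemma multifact_absorb_commutator:
  assumes gd: "graded_decomp p" and md: "module scale" and fs: "finite_filt_support p"
    and d': "multifact scale p k w d'" and n: "n \<ge> 1" and agree: "\<forall>i<n. d i = d' i"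
    and \<eta>: "lin_hom scale scale p p (0, int n) \<eta>"
    and comm: "\<And>x. d n x - d' n x = \<eta> (d 0 x) - d 0 (\<eta> x)"
  shows "\<exists>d''. multifact scale p k w d'' \<and> mf_iso scale p (total d'') p (total d') \<and>
    (\<forall>i<n + 1. d'' i = d i)"
proof -
  obtain d'' where "multifact scale p k w d''" "mf_iso scale p (total d'') p (total d')"
    and low: "\<And>m. m < n \<Longrightarrow> d'' m = d' m"
    and top: "\<And>x. d'' n x = d' n x + d' 0 (- \<eta> x) - - \<eta> (d' 0 x)"
    using multifact_gauge_transform[OF gd md fs d' n lin_hom_uminus[OF gd md \<eta>]] by blast
  moreover have "d'' i = d i" if "i < n + 1" for i
  proof (cases "i < n")
    case True
    then show ?thesis using low agree by simp
  next
    case False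
    have "d' 0 = d 0" using agree n by simp
    moreover have "additive (d' 0)" using d' unfolding multifact_def by (blast intro: lin_hom_additive)
    ultimately have "d'' n x = d n x" for x
      using comm[of x] by (simp add: top additive.minus algebra_simps)
    with False that show ?thesis by (auto simp: less_Suc_eq)
  qed
  ultimately show ?thesis by blast
qed

theorem lemma2p3:
  fixes pR :: "int \<times> int \<Rightarrow> 'r::comm_ring_1 \<Rightarrow> 'r"
    and scale :: "'r \<Rightarrow> 'm::ab_group_add \<Rightarrow> 'm"
    and p :: "int \<times> int \<Rightarrow> 'm \<Rightarrow> 'm"
    and k :: int and w :: 'r
    and d d' :: "nat \<Rightarrow> 'm \<Rightarrow> 'm"
    and n :: nat
  assumes "graded_ring pR"
    and "graded_module pR scale p"
    and "odd k"
    and "homog pR (2 * k, 0) w"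
    and "finite_filt_support p"
    and "multifact scale p k w d"
    and "multifact scale p k w d'"
    and "n \<ge> 1"
    and "\<forall>i<n. d i = d' i"
  shows "(chain_map scale scale p (d 0) (shift_grading p (- k, 0)) (shift_diff (- k) (d 0))
           (\<lambda>i. if i = n then (\<lambda>x. d n x - d' n x) else (\<lambda>x. 0))) \<and>
         (mf_homotopic scale scale p (d 0) (shift_grading p (- k, 0)) (shift_diff (- k) (d 0)) k 0
           (\<lambda>i. if i = n then (\<lambda>x. d n x - d' n x) else (\<lambda>x. 0)) (\<lambda>i x. 0)
         \<longrightarrow> (\<exists>d''. multifact scale p k w d'' \<and> mf_iso scale p (total d'') p (total d') \<and>
                    (\<forall>i<n + 1. d'' i = d i)))"
proof (intro conjI impI)
  have gd: "graded_decomp p" and md: "module scale"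
    using assms(2) unfolding graded_module_def by blast+
  have dl: "lin_hom scale scale p p (k, int i) (d i)" "lin_hom scale scale p p (k, int i) (d' i)" for i
    using assms(6,7) unfolding multifact_def by blast+
  have d0: "lin_hom scale scale p p (k, 0) (d 0)" using dl(1)[of 0] by simp
  have diff: "lin_hom scale scale p p (k, int n) (\<lambda>x. d n x - d' n x)"
    by (rule lin_hom_diff[OF gd md dl])
  have shift: "shift_diff (- k) (d 0) = (\<lambda>x. - d 0 x)" using assms(3) by (simp add: shift_diff_def)
  show "chain_map scale scale p (d 0) (shift_grading p (- k, 0)) (shift_diff (- k) (d 0))
          (\<lambda>i. if i = n then (\<lambda>x. d n x - d' n x) else (\<lambda>x. 0))"
    using multifact_first_difference_anticommutes[OF gd md assms(6-9)] diff
    by (intro chain_map_concentrated md) (simp_all add: homog_shift_grading homog_zero[OF gd]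
        lin_hom_shift_grading shift)
  assume "mf_homotopic scale scale p (d 0) (shift_grading p (- k, 0)) (shift_diff (- k) (d 0)) k 0
           (\<lambda>i. if i = n then (\<lambda>x. d n x - d' n x) else (\<lambda>x. 0)) (\<lambda>i x. 0)"
  then obtain h where h: "\<And>i. lin_hom scale scale p p (0, i) (h i)" "\<And>x. finite {i. h i x \<noteq> 0}"
    and htpy: "\<And>x. d n x - d' n x = total h (d 0 x) + shift_diff (- k) (d 0) (total h x)"
    using mf_homotopic_concentrated_zero by blast
  have "d n x - d' n x = h (int n) (d 0 x) - d 0 (h (int n) x)" for x
    by (rule commutator_component[OF gd d0 h diff]) (simp add: htpy shift)
  then show "\<exists>d''. multifact scale p k w d'' \<and> mf_iso scale p (total d'') p (total d') \<and>
      (\<forall>i<n + 1. d'' i = d i)"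
    by (rule multifact_absorb_commutator[OF gd md assms(5,7,8,9) h(1)])
qed

end
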